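(* Let $(\mathcal X,\mathcal B,\pi)$ be a measure space with $\pi$ $\sigma$-finite, $r$ measurable, $\{\varepsilon(x)\}$ an arbitrary real-valued random field, $\alpha\in(0,1)$, and $p_{\rm ref}\in\mathcal P_\pi$. Assume $0<Q_*<\infty$ with $Q\le Q_*$ everywhere, and $$\alpha>\Bigl(\int\frac{Q_*}{Q_*-Q(x)}\,p_{\rm ref}(x)\,\pi(dx)\Bigr)^{-1}.$$ Then the operator $L_N$ has a unique fixed point $w_*$ in $\mathcal P_{\mathbb P_{\rm ref}}$, and the constant $c_*:=\langle w_*,Q\rangle_{\rm ref}$ lies in $\bigl((1-\alpha)Q_*,\,Q_*\bigr]$.
   Context: $\mathcal P_\pi$ = probability densities w.r.t. $\pi$. $Q(x):=e^{r(x)}\mathbb E[e^{\varepsilon(x)}]$, $Q_*:=\operatorname*{ess\,sup}_\pi Q$; in the displayed condition the integrand is $+\infty$ where $Q=Q_*$ and the reciprocal of $+\infty$ is $0$. $\mathbb P_{\rm ref}(dx)=p_{\rm ref}(x)\pi(dx)$; $\mathcal P_{\mathbb P_{\rm ref}}$ = probability densities w.r.t. $\mathbb P_{\rm ref}$; $\langle f,g\rangle_{\rm ref}=\int fg\,d\mathbb P_{\rm ref}$. On the cone $\mathcal K=\{f\in L^1(\mathbb P_{\rm ref}):f>0\ \mathbb P_{\rm ref}\text{-a.s.}\}$, $L[f]=\alpha\langle f,Q\rangle_{\rm ref}+(1-\alpha)fQ$ and $L_N[f]=L[f]/\langle f,Q\rangle_{\rm ref}$. *)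

theory Defs
  imports "HOL-Probability.Probability"
begin

definition Qfun :: "('a \<Rightarrow> real) \<Rightarrow> ('a \<Rightarrow> 'w \<Rightarrow> real) \<Rightarrow> 'w measure \<Rightarrow> 'a \<Rightarrow> ennreal" where
  "Qfun r eps P x = ennreal (exp (r x)) * (\<integral>\<^sup>+ \<omega>. ennreal (exp (eps x \<omega>)) \<partial>P)"

definition prob_densities :: "'a measure \<Rightarrow> ('a \<Rightarrow> real) set" where
  "prob_densities M = {f. f \<in> borel_measurable M \<and> (AE x in M. 0 \<le> f x)
                          \<and> (\<integral>\<^sup>+ x. ennreal (f x) \<partial>M) = 1}"

definition Pref :: "'a measure \<Rightarrow> ('a \<Rightarrow> real) \<Rightarrow> 'a measure" where
  "Pref M p = density M (\<lambda>x. ennreal (p x))"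

definition inner_ref :: "'a measure \<Rightarrow> ('a \<Rightarrow> real) \<Rightarrow> ('a \<Rightarrow> real) \<Rightarrow> ('a \<Rightarrow> real) \<Rightarrow> real" where
  "inner_ref M p f g = (\<integral> x. f x * g x \<partial>(Pref M p))"

definition pos_cone :: "'a measure \<Rightarrow> ('a \<Rightarrow> real) \<Rightarrow> ('a \<Rightarrow> real) set" where
  "pos_cone M p = {f. integrable (Pref M p) f \<and> (AE x in Pref M p. 0 < f x)}"

definition Lop :: "'a measure \<Rightarrow> ('a \<Rightarrow> real) \<Rightarrow> real \<Rightarrow> ('a \<Rightarrow> real) \<Rightarrow> ('a \<Rightarrow> real) \<Rightarrow> 'a \<Rightarrow> real" where
  "Lop M p \<alpha> Q f x = \<alpha> * inner_ref M p f Q + (1 - \<alpha>) * f x * Q x"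

definition LNop :: "'a measure \<Rightarrow> ('a \<Rightarrow> real) \<Rightarrow> real \<Rightarrow> ('a \<Rightarrow> real) \<Rightarrow> ('a \<Rightarrow> real) \<Rightarrow> 'a \<Rightarrow> real" where
  "LNop M p \<alpha> Q f x = Lop M p \<alpha> Q f x / inner_ref M p f Q"

end

theory Submission
  imports Defs
begin

(* Writing c = <w, Q>_ref, the equation L_N[w] = w reads w (c - (1 - alpha) Q) = alpha c, so a
   positive density w is a fixed point exactly when w = alpha c / (c - (1 - alpha) Q) with
   c > (1 - alpha) Q a.e. and G(c) = 1, where G(c) is the P_ref-integral of that function.
   On ((1 - alpha) Q_*, infinity) the function G is locally Lipschitz, non-increasing, and
   below 1 for c > Q_*; by Fatou's lemma, as c decreases to (1 - alpha) Q_* it eventually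
   exceeds alpha times the integral in the hypothesis, hence 1, and the intermediate value
   theorem yields a root.  G is strictly decreasing unless Q = 0 a.e., in which case G = alpha,
   so the root, and with it the fixed point, is unique. *)

lemma ratio_diff_eq:
  fixes a t c c' :: real
  assumes "t < c" "t < c'"
  shows "a * c / (c - t) - a * c' / (c' - t) = a * t * (c' - c) / ((c - t) * (c' - t))"
  using assms by (simp add: divide_simps) (simp add: algebra_simps)

lemma ratio_antimono:
  fixes a t c c' :: real
  assumes "0 \<le> a" "0 \<le> t" "t < c" "c \<le> c'"
  shows "a * c' / (c' - t) \<le> a * c / (c - t)"
proof -
  have "0 \<le> a * t * (c' - c) / ((c - t) * (c' - t))"
    using assms by (intro divide_nonneg_pos mult_nonneg_nonneg) auto
  then show ?thesis using ratio_diff_eq[of t c c' a] assms by linarith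
qed

lemma ratio_eq_imp_eq_0:
  fixes a t c c' :: real
  assumes "a \<noteq> 0" "t < c" "c < c'" "a * c / (c - t) = a * c' / (c' - t)"
  shows "t = 0"
  using ratio_diff_eq[of t c c' a] assms by simp

lemma ratio_lipschitz:
  fixes a t T c c' c0 :: real
  assumes "0 \<le> a" "0 \<le> t" "t \<le> T" "T < c0" "c0 \<le> c" "c0 \<le> c'"
  shows "dist (a * c / (c - t)) (a * c' / (c' - t)) \<le> a * T / (c0 - T)\<^sup>2 * dist c c'"
proof -
  have "(c0 - T)\<^sup>2 \<le> (c - t) * (c' - t)"
    unfolding power2_eq_square using assms by (intro mult_mono) auto
  moreover have "0 < (c0 - T)\<^sup>2" using assms by simp
  ultimately have "a * t * \<bar>c' - c\<bar> / ((c - t) * (c' - t)) \<le> a * T * \<bar>c' - c\<bar> / (c0 - T)\<^sup>2"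
    using assms by (intro frac_le mult_mono) auto
  moreover have "dist (a * c / (c - t)) (a * c' / (c' - t)) = a * t * \<bar>c' - c\<bar> / ((c - t) * (c' - t))"
    using ratio_diff_eq[of t c c' a] assms by (simp add: dist_real_def abs_mult abs_divide)
  ultimately show ?thesis by (simp add: dist_real_def abs_minus_commute)
qed

lemma ennreal_inverse_less_imp_one_less_mult:
  fixes I :: ennreal
  assumes "0 < a" and "inverse I < ennreal a"
  shows "1 < ennreal a * I"
proof (cases I)
  case (real i)
  show ?thesis
  proof (cases "i = 0")
    case True
    then show ?thesis using assms real by simp
  next
    case False
    then have "0 < i" using real by simp
    moreover have "inverse i < a"
      using assms real \<open>0 < i\<close> by (simp add: inverse_ennreal ennreal_less_iff)
    ultimately show ?thesis using real assms by (simp add: field_simps ennreal_mult''[symmetric])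
  qed
next
  case top
  then show ?thesis using assms by (simp add: ennreal_mult_top)
qed

lemma ennreal_ratio_eq_enn2real:
  fixes a b :: ennreal
  assumes "a \<le> b" "b < \<infinity>"
  shows "(if a = b then \<infinity> else b / (b - a))
    = (if enn2real a = enn2real b then \<infinity> else ennreal (enn2real b / (enn2real b - enn2real a)))"
proof -
  obtain x y where xy: "a = ennreal x" "b = ennreal y" "0 \<le> x" "x \<le> y"
    using assms by (cases a; cases b) (auto simp: ennreal_le_iff top_unique)
  show ?thesis
  proof (cases "x = y")
    case False
    then have "x < y" using xy by simp
    then have "b / (b - a) = ennreal (y / (y - x))"
      using xy by (simp add: ennreal_minus divide_ennreal)
    then show ?thesis using xy False by simp
  qed (use xy in simp)
qed

locale profile_space = prob_space N for N :: "'a measure" +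
  fixes q :: "'a \<Rightarrow> real" and S \<alpha> :: real
  assumes q_measurable[measurable]: "q \<in> borel_measurable N"
    and q_nonneg: "x \<in> space N \<Longrightarrow> 0 \<le> q x"
    and q_le_S: "x \<in> space N \<Longrightarrow> q x \<le> S"
    and S_pos: "0 < S"
    and alpha_pos: "0 < \<alpha>" and alpha_less_1: "\<alpha> < 1"
begin

(* N, q and S stand for P_ref, Q and Q_*; profile c is the only possible fixed point w of L_N
   with <w, Q>_ref = c. *)
definition profile :: "real \<Rightarrow> 'a \<Rightarrow> real" where
  "profile c x = \<alpha> * c / (c - (1 - \<alpha>) * q x)"

lemma profile_measurable[measurable]: "profile c \<in> borel_measurable N"
  unfolding profile_def by measurable

lemma AE_q_nonneg: "AE x in N. 0 \<le> q x"
  using q_nonneg by (intro AE_I2) simp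

lemma mult_q_le_mult_S: "x \<in> space N \<Longrightarrow> (1 - \<alpha>) * q x \<le> (1 - \<alpha>) * S"
  using q_le_S alpha_less_1 by simp

lemma gt_mult_S_imp_pos: "(1 - \<alpha>) * S < c \<Longrightarrow> 0 < c"
  using S_pos alpha_less_1 by (smt (verit) mult_pos_pos)

lemma profile_pos:
  assumes "(1 - \<alpha>) * S < c" "x \<in> space N"
  shows "0 < profile c x"
proof -
  have "0 \<le> (1 - \<alpha>) * q x" using q_nonneg[OF assms(2)] alpha_less_1 by simp
  then show ?thesis
    unfolding profile_def using assms mult_q_le_mult_S[OF assms(2)] alpha_pos by simp
qed

lemma profile_le:
  assumes "(1 - \<alpha>) * S < c" "x \<in> space N"
  shows "profile c x \<le> \<alpha> * c / (c - (1 - \<alpha>) * S)"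
  unfolding profile_def using assms mult_q_le_mult_S[OF assms(2)] alpha_pos gt_mult_S_imp_pos[OF assms(1)]
  by (intro divide_left_mono) auto

lemma integrable_profile: "(1 - \<alpha>) * S < c \<Longrightarrow> integrable N (profile c)"
  by (rule integrable_const_bound[where B = "\<alpha> * c / (c - (1 - \<alpha>) * S)"])
    (auto intro!: AE_I2 simp: less_imp_le profile_pos profile_le)

lemma integral_profile_le:
  "(1 - \<alpha>) * S < c \<Longrightarrow> (\<integral>x. profile c x \<partial>N) \<le> \<alpha> * c / (c - (1 - \<alpha>) * S)"
  using integral_mono[of N "profile c" "\<lambda>_. \<alpha> * c / (c - (1 - \<alpha>) * S)"]
  by (simp add: integrable_profile profile_le prob_space)

lemma integral_profile_less_1:
  assumes "S < c"
  shows "(\<integral>x. profile c x \<partial>N) < 1"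
proof -
  have "(1 - \<alpha>) * S < S" using alpha_pos S_pos by simp
  with assms have "(1 - \<alpha>) * S < c" by simp
  moreover have "\<alpha> * c / (c - (1 - \<alpha>) * S) < 1"
    using \<open>(1 - \<alpha>) * S < c\<close> mult_strict_left_mono[OF assms, of "1 - \<alpha>"] alpha_less_1
    by (simp add: divide_less_eq algebra_simps)
  ultimately show ?thesis using integral_profile_le[of c] by linarith
qed

lemma lipschitz_integral_profile:
  assumes "(1 - \<alpha>) * S < c\<^sub>0"
  shows "(\<alpha> * ((1 - \<alpha>) * S) / (c\<^sub>0 - (1 - \<alpha>) * S)\<^sup>2)-lipschitz_on {c\<^sub>0..} (\<lambda>c. \<integral>x. profile c x \<partial>N)"
proof (rule lipschitz_onI)
  fix c c' assume c: "c \<in> {c\<^sub>0..}" and c': "c' \<in> {c\<^sub>0..}"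
  then have int: "integrable N (profile c)" "integrable N (profile c')"
    using assms by (auto intro!: integrable_profile)
  have "dist (\<integral>x. profile c x \<partial>N) (\<integral>x. profile c' x \<partial>N) = norm (\<integral>x. profile c x - profile c' x \<partial>N)"
    using int by (simp add: dist_norm)
  also have "\<dots> \<le> (\<integral>x. dist (profile c x) (profile c' x) \<partial>N)"
    using integral_norm_bound by (simp add: dist_norm)
  also have "\<dots> \<le> (\<integral>x. \<alpha> * ((1 - \<alpha>) * S) / (c\<^sub>0 - (1 - \<alpha>) * S)\<^sup>2 * dist c c' \<partial>N)"
  proof (rule integral_mono)
    show "integrable N (\<lambda>x. dist (profile c x) (profile c' x))"
      using int by (simp add: dist_real_def)
    show "dist (profile c x) (profile c' x) \<le> \<alpha> * ((1 - \<alpha>) * S) / (c\<^sub>0 - (1 - \<alpha>) * S)\<^sup>2 * dist c c'"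
      if "x \<in> space N" for x
      unfolding profile_def using c c' assms alpha_pos q_nonneg[OF that] mult_q_le_mult_S[OF that] alpha_less_1
      by (intro ratio_lipschitz) auto
  qed simp
  finally show "dist (\<integral>x. profile c x \<partial>N) (\<integral>x. profile c' x \<partial>N)
      \<le> \<alpha> * ((1 - \<alpha>) * S) / (c\<^sub>0 - (1 - \<alpha>) * S)\<^sup>2 * dist c c'"
    by (simp add: prob_space)
qed (use alpha_pos alpha_less_1 S_pos in simp)

lemma exists_integral_profile_gt_1:
  assumes "inverse (\<integral>\<^sup>+x. (if q x = S then \<infinity> else ennreal (S / (S - q x))) \<partial>N) < ennreal \<alpha>"
  shows "\<exists>c. (1 - \<alpha>) * S < c \<and> 1 < (\<integral>x. profile c x \<partial>N)"
proof -
  define c :: "nat \<Rightarrow> real" where "c n = (1 - \<alpha>) * S + S / Suc n" for n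
  have c_gt: "(1 - \<alpha>) * S < c n" for n
    unfolding c_def using S_pos by simp
  have profile_lim: "(\<lambda>n. ennreal (profile (c n) x))
      \<longlonglongrightarrow> ennreal \<alpha> * (if q x = S then \<infinity> else ennreal (S / (S - q x)))" if x: "x \<in> space N" for x
  proof (cases "q x = S")
    case True
    have "profile (c n) x = \<alpha> * (1 + (1 - \<alpha>) * (1 + real n))" for n
    proof -
      have "c n - (1 - \<alpha>) * q x = S / Suc n" unfolding c_def True by simp
      then have "profile (c n) x = \<alpha> * c n * Suc n / S" unfolding profile_def by simp
      moreover have "c n * Suc n = (1 + (1 - \<alpha>) * (1 + real n)) * S"
        unfolding c_def by (simp add: field_simps)
      ultimately show ?thesis using S_pos by (simp add: mult.assoc)
    qed
    moreover have "filterlim (\<lambda>n. \<alpha> * (1 + (1 - \<alpha>) * (1 + real n))) at_top sequentially"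
      using alpha_pos alpha_less_1
      by (intro filterlim_tendsto_pos_mult_at_top[OF tendsto_const] filterlim_tendsto_add_at_top[OF tendsto_const]
          filterlim_tendsto_pos_mult_at_top[OF tendsto_const] filterlim_real_sequentially) auto
    ultimately show ?thesis
      using True alpha_pos by (simp add: ennreal_tendsto_top_eq_at_top ennreal_mult_top)
  next
    case False
    then have "q x < S" using q_le_S[OF x] by simp
    have "c \<longlonglongrightarrow> (1 - \<alpha>) * S + 0"
      unfolding c_def by (intro tendsto_add tendsto_const LIMSEQ_Suc[OF lim_const_over_n])
    then have "(\<lambda>n. profile (c n) x) \<longlonglongrightarrow> \<alpha> * ((1 - \<alpha>) * S) / ((1 - \<alpha>) * S - (1 - \<alpha>) * q x)"
      unfolding profile_def using \<open>q x < S\<close> alpha_less_1 by (intro tendsto_intros) auto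
    moreover have "\<alpha> * ((1 - \<alpha>) * S) / ((1 - \<alpha>) * S - (1 - \<alpha>) * q x) = \<alpha> * (S / (S - q x))"
      using alpha_less_1 by (simp add: right_diff_distrib[symmetric])
    ultimately show ?thesis
      using False \<open>q x < S\<close> alpha_pos S_pos by (simp add: tendsto_ennrealI ennreal_mult[symmetric])
  qed
  have "1 < ennreal \<alpha> * (\<integral>\<^sup>+x. (if q x = S then \<infinity> else ennreal (S / (S - q x))) \<partial>N)"
    using ennreal_inverse_less_imp_one_less_mult[OF alpha_pos assms] .
  also have "\<dots> = (\<integral>\<^sup>+x. ennreal \<alpha> * (if q x = S then \<infinity> else ennreal (S / (S - q x))) \<partial>N)"
    by (rule nn_integral_cmult[symmetric]) measurable
  also have "\<dots> = (\<integral>\<^sup>+x. liminf (\<lambda>n. ennreal (profile (c n) x)) \<partial>N)"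
    using profile_lim by (intro nn_integral_cong) (simp add: lim_imp_Liminf[symmetric])
  also have "\<dots> \<le> liminf (\<lambda>n. \<integral>\<^sup>+x. ennreal (profile (c n) x) \<partial>N)"
    by (rule nn_integral_liminf) measurable
  also have "\<dots> = liminf (\<lambda>n. ennreal (\<integral>x. profile (c n) x \<partial>N))"
    using c_gt integrable_profile profile_pos by (simp add: nn_integral_eq_integral less_imp_le)
  finally have "\<forall>\<^sub>F n in sequentially. 1 < ennreal (\<integral>x. profile (c n) x \<partial>N)"
    by (rule less_LiminfD)
  then obtain n where "1 < ennreal (\<integral>x. profile (c n) x \<partial>N)"
    by (auto simp: eventually_sequentially)
  then show ?thesis using c_gt by (auto simp: one_less_ennreal)
qed

lemma exists_normalizing_constant:
  assumes "inverse (\<integral>\<^sup>+x. (if q x = S then \<infinity> else ennreal (S / (S - q x))) \<partial>N) < ennreal \<alpha>"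
  shows "\<exists>c. (1 - \<alpha>) * S < c \<and> (\<integral>x. profile c x \<partial>N) = 1"
proof -
  obtain c\<^sub>1 where c\<^sub>1: "(1 - \<alpha>) * S < c\<^sub>1" "1 < (\<integral>x. profile c\<^sub>1 x \<partial>N)"
    using exists_integral_profile_gt_1[OF assms] by blast
  have "(\<integral>x. profile (c\<^sub>1 + S) x \<partial>N) < 1"
    using gt_mult_S_imp_pos[OF c\<^sub>1(1)] by (intro integral_profile_less_1) simp
  moreover have "continuous_on {c\<^sub>1..c\<^sub>1 + S} (\<lambda>c. \<integral>x. profile c x \<partial>N)"
    using lipschitz_on_continuous_on[OF lipschitz_integral_profile[OF c\<^sub>1(1)]]
    by (rule continuous_on_subset) auto
  ultimately obtain c where "c\<^sub>1 \<le> c" "(\<integral>x. profile c x \<partial>N) = 1"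
    using IVT2'[of "\<lambda>c. \<integral>x. profile c x \<partial>N" "c\<^sub>1 + S" 1 c\<^sub>1] c\<^sub>1(2) S_pos by auto
  with c\<^sub>1(1) show ?thesis by (intro exI[of _ c]) auto
qed

lemma AE_q_eq_0_if_integral_profile_eq:
  assumes "a < b" "AE x in N. (1 - \<alpha>) * q x < a"
    and "integrable N (profile a)" "integrable N (profile b)"
    and "(\<integral>x. profile a x \<partial>N) = (\<integral>x. profile b x \<partial>N)"
  shows "AE x in N. q x = 0"
proof -
  have "AE x in N. 0 \<le> profile a x - profile b x"
    using assms(2) AE_q_nonneg
  proof eventually_elim
    case (elim x)
    then show ?case unfolding profile_def
      using ratio_antimono[of \<alpha> "(1 - \<alpha>) * q x" a b] alpha_pos alpha_less_1 assms(1) by simp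
  qed
  moreover have "(\<integral>x. profile a x - profile b x \<partial>N) = 0"
    using assms(3-5) by simp
  ultimately have "AE x in N. profile a x - profile b x = 0"
    using assms(3,4) by (subst integral_nonneg_eq_0_iff_AE[symmetric]) auto
  then show ?thesis
    using assms(2)
  proof eventually_elim
    case (elim x)
    then have "(1 - \<alpha>) * q x = 0"
      unfolding profile_def using alpha_pos assms(1) by (intro ratio_eq_imp_eq_0[of \<alpha> _ a b]) auto
    then show ?case using alpha_less_1 by simp
  qed
qed

lemma normalizing_constant_unique:
  assumes c: "(1 - \<alpha>) * S < c" "(\<integral>x. profile c x \<partial>N) = 1"
    and c': "AE x in N. (1 - \<alpha>) * q x < c'" "integrable N (profile c')" "(\<integral>x. profile c' x \<partial>N) = 1"
  shows "c' = c"
proof (rule ccontr)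
  assume "c' \<noteq> c"
  have c_bound: "AE x in N. (1 - \<alpha>) * q x < c"
    using mult_q_le_mult_S c(1) by (intro AE_I2) (meson le_less_trans)
  have "AE x in N. q x = 0"
  proof (cases "c < c'")
    case True
    then show ?thesis using AE_q_eq_0_if_integral_profile_eq[of c c'] c c' c_bound integrable_profile by simp
  next
    case False
    with \<open>c' \<noteq> c\<close> have "c' < c" by simp
    then show ?thesis using AE_q_eq_0_if_integral_profile_eq[of c' c] c c' integrable_profile by simp
  qed
  then have "AE x in N. profile c x = \<alpha>"
    by eventually_elim (use gt_mult_S_imp_pos[OF c(1)] in \<open>simp add: profile_def\<close>)
  then have "(\<integral>x. profile c x \<partial>N) = \<alpha>"
    using integral_cong_AE[of "profile c" N "\<lambda>_. \<alpha>"] by (simp add: prob_space)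
  with c(2) alpha_less_1 show False by simp
qed

lemma profile_mult_eq: "(1 - \<alpha>) * q x < c \<Longrightarrow> profile c x * (c - (1 - \<alpha>) * q x) = \<alpha> * c"
  unfolding profile_def by simp

lemma profile_mult_q_eq:
  assumes "(1 - \<alpha>) * q x < c"
  shows "profile c x * q x = (profile c x * c - \<alpha> * c) / (1 - \<alpha>)"
  using profile_mult_eq[OF assms] alpha_less_1 by (simp add: field_simps)

lemma integral_profile_mult_q:
  assumes "(1 - \<alpha>) * S < c" "(\<integral>x. profile c x \<partial>N) = 1"
  shows "(\<integral>x. profile c x * q x \<partial>N) = c"
proof -
  have "(\<integral>x. profile c x * q x \<partial>N) = (\<integral>x. (profile c x * c - \<alpha> * c) / (1 - \<alpha>) \<partial>N)"
    using assms(1) mult_q_le_mult_S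
    by (intro Bochner_Integration.integral_cong refl profile_mult_q_eq) (meson le_less_trans)
  also have "\<dots> = c"
    using assms integrable_profile alpha_less_1 by (simp add: prob_space field_simps)
  finally show ?thesis .
qed

lemma normalizing_constant_le:
  assumes "(1 - \<alpha>) * S < c" "(\<integral>x. profile c x \<partial>N) = 1"
  shows "c \<le> S"
proof -
  have bound: "0 \<le> profile c x * q x \<and> profile c x * q x \<le> profile c x * S" if "x \<in> space N" for x
    using profile_pos[OF assms(1) that] q_nonneg[OF that] q_le_S[OF that] by simp
  have int_S: "integrable N (\<lambda>x. profile c x * S)"
    using integrable_profile[OF assms(1)] by simp
  have "AE x in N. norm (profile c x * q x) \<le> norm (profile c x * S)"
    using bound by (intro AE_I2) (metis abs_of_nonneg order_trans real_norm_def)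
  then have "integrable N (\<lambda>x. profile c x * q x)"
    by (intro Bochner_Integration.integrable_bound[OF int_S]) measurable
  then have "(\<integral>x. profile c x * q x \<partial>N) \<le> (\<integral>x. profile c x * S \<partial>N)"
    using int_S by (rule integral_mono) (use bound in blast)
  then show ?thesis using assms by (simp add: integral_profile_mult_q)
qed

end

lemma prob_space_Pref:
  assumes "p \<in> prob_densities M"
  shows "prob_space (Pref M p)"
proof (rule prob_spaceI)
  have "p \<in> borel_measurable M" "(\<integral>\<^sup>+ x. ennreal (p x) \<partial>M) = 1"
    using assms by (auto simp: prob_densities_def)
  then show "emeasure (Pref M p) (space (Pref M p)) = 1"
    unfolding Pref_def by (simp add: emeasure_density)
qed

lemma LNop_eq_iff:
  assumes "inner_ref M p f q \<noteq> 0"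
  shows "LNop M p \<alpha> q f x = f x
    \<longleftrightarrow> f x * (inner_ref M p f q - (1 - \<alpha>) * q x) = \<alpha> * inner_ref M p f q"
  using assms unfolding LNop_def Lop_def by (simp add: field_simps) (simp only: eq_commute)

context profile_space
begin

lemma profile_in_prob_densities:
  assumes "(1 - \<alpha>) * S < c" "(\<integral>x. profile c x \<partial>N) = 1"
  shows "profile c \<in> prob_densities N"
proof -
  have "AE x in N. 0 \<le> profile c x"
    using profile_pos[OF assms(1)] by (intro AE_I2) (simp add: less_imp_le)
  then show ?thesis
    using assms integrable_profile by (simp add: prob_densities_def nn_integral_eq_integral)
qed

lemma profile_fixed_point:
  assumes N: "N = Pref M p" and c: "(1 - \<alpha>) * S < c" "(\<integral>x. profile c x \<partial>N) = 1"
  shows "profile c \<in> pos_cone M p" "inner_ref M p (profile c) q = c"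
    and "AE x in N. LNop M p \<alpha> q (profile c) x = profile c x"
proof -
  show "profile c \<in> pos_cone M p"
    using c integrable_profile profile_pos unfolding pos_cone_def N[symmetric] by (auto intro: AE_I2)
  show inner: "inner_ref M p (profile c) q = c"
    using integral_profile_mult_q[OF c] unfolding inner_ref_def N[symmetric] .
  have "profile c x * (c - (1 - \<alpha>) * q x) = \<alpha> * c" if "x \<in> space N" for x
    using c(1) mult_q_le_mult_S[OF that] by (intro profile_mult_eq) simp
  then show "AE x in N. LNop M p \<alpha> q (profile c) x = profile c x"
    using gt_mult_S_imp_pos[OF c(1)] by (intro AE_I2) (simp add: LNop_eq_iff inner)
qed

lemma inner_ref_pos_if_fixed_point:
  assumes N: "N = Pref M p"
    and w: "w \<in> pos_cone M p" "AE x in N. LNop M p \<alpha> q w x = w x"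
  shows "0 < inner_ref M p w q"
proof -
  have w_pos: "AE x in N. 0 < w x"
    using w(1) unfolding pos_cone_def N[symmetric] by auto
  have "0 \<le> inner_ref M p w q"
    unfolding inner_ref_def N[symmetric] using w_pos AE_q_nonneg
    by (intro integral_nonneg_AE) (auto elim: AE_mp)
  moreover have "inner_ref M p w q \<noteq> 0"
  proof
    \<comment> \<open>\<open>LNop\<close> divides by \<open>inner_ref M p w q\<close>, so \<open>x / 0 = 0\<close> would force \<open>w = 0\<close>\<close>
    assume inner_0: "inner_ref M p w q = 0"
    have "AE x in N. w x = 0"
      using w(2) by eventually_elim (simp add: LNop_def inner_0)
    with w_pos have "AE x in N. False" by eventually_elim simp
    then show False by simp
  qed
  ultimately show ?thesis by simp
qed

lemma fixed_point_eq_profile: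
  assumes N: "N = Pref M p"
    and w: "w \<in> prob_densities N" "w \<in> pos_cone M p" "AE x in N. LNop M p \<alpha> q w x = w x"
    and c: "(1 - \<alpha>) * S < c" "(\<integral>x. profile c x \<partial>N) = 1"
  shows "AE x in N. w x = profile c x"
proof -
  define c' where "c' = inner_ref M p w q"
  have "0 < c'" unfolding c'_def using inner_ref_pos_if_fixed_point[OF N w(2,3)] .
  have w_int: "integrable N w" and w_pos: "AE x in N. 0 < w x"
    using w(2) unfolding pos_cone_def N[symmetric] by auto
  have "(\<integral>x. w x \<partial>N) = 1"
    using w(1) w_pos by (subst integral_eq_nn_integral) (auto simp: prob_densities_def elim: AE_mp)
  have "AE x in N. (1 - \<alpha>) * q x < c' \<and> w x = profile c' x"
    using w(3) w_pos
  proof eventually_elim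
    case (elim x)
    then have eq: "w x * (c' - (1 - \<alpha>) * q x) = \<alpha> * c'"
      using \<open>0 < c'\<close> by (simp add: LNop_eq_iff c'_def)
    then have "0 < w x * (c' - (1 - \<alpha>) * q x)" using \<open>0 < c'\<close> alpha_pos by simp
    then have "(1 - \<alpha>) * q x < c'" using elim(2) by (simp add: zero_less_mult_iff)
    with eq show ?case unfolding profile_def by (simp add: field_simps)
  qed
  then have "AE x in N. (1 - \<alpha>) * q x < c'" and w_eq: "AE x in N. w x = profile c' x"
    by auto
  moreover have "integrable N (profile c')"
    using w_int w_eq by (subst integrable_cong_AE[symmetric]) auto
  moreover have "(\<integral>x. profile c' x \<partial>N) = 1"
    using \<open>(\<integral>x. w x \<partial>N) = 1\<close> w_eq borel_measurable_integrable[OF w_int]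
    by (subst integral_cong_AE[symmetric]) auto
  ultimately have "c' = c" using normalizing_constant_unique[OF c] by blast
  with w_eq show ?thesis by simp
qed

end

lemma profile_space_Pref:
  assumes "p \<in> prob_densities M" "Q \<in> borel_measurable M"
    and "0 < Qs" "Qs < \<infinity>" "\<And>x. x \<in> space M \<Longrightarrow> Q x \<le> Qs"
    and "0 < \<alpha>" "\<alpha> < 1"
  shows "profile_space (Pref M p) (\<lambda>x. enn2real (Q x)) (enn2real Qs) \<alpha>"
proof (rule profile_space.intro[OF prob_space_Pref[OF assms(1)]], unfold_locales)
  show "(\<lambda>x. enn2real (Q x)) \<in> borel_measurable (Pref M p)"
    unfolding Pref_def using assms(2) by simp
  show "enn2real (Q x) \<le> enn2real Qs" if "x \<in> space (Pref M p)" for x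
    using that assms(4,5) by (simp add: Pref_def enn2real_mono)
  show "0 < enn2real Qs" using assms(3,4) by (simp add: enn2real_positive_iff)
qed (use assms(6,7) in simp_all)

lemma nn_integral_ratio_Pref:
  assumes [measurable]: "Q \<in> borel_measurable M" "p \<in> borel_measurable M"
    and "Qs < \<infinity>" "\<And>x. x \<in> space M \<Longrightarrow> Q x \<le> Qs"
  shows "(\<integral>\<^sup>+ x. (if Q x = Qs then \<infinity> else Qs / (Qs - Q x)) * ennreal (p x) \<partial>M)
    = (\<integral>\<^sup>+ x. (if enn2real (Q x) = enn2real Qs then \<infinity>
         else ennreal (enn2real Qs / (enn2real Qs - enn2real (Q x)))) \<partial>Pref M p)"
proof -
  have "(\<integral>\<^sup>+ x. (if Q x = Qs then \<infinity> else Qs / (Qs - Q x)) * ennreal (p x) \<partial>M)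
      = (\<integral>\<^sup>+ x. ennreal (p x) * (if enn2real (Q x) = enn2real Qs then \<infinity>
                   else ennreal (enn2real Qs / (enn2real Qs - enn2real (Q x)))) \<partial>M)"
    using assms(3,4) by (intro nn_integral_cong) (simp add: ennreal_ratio_eq_enn2real mult.commute)
  also have "\<dots> = (\<integral>\<^sup>+ x. (if enn2real (Q x) = enn2real Qs then \<infinity>
                   else ennreal (enn2real Qs / (enn2real Qs - enn2real (Q x)))) \<partial>Pref M p)"
    unfolding Pref_def by (rule nn_integral_density[symmetric]) measurable
  finally show ?thesis .
qed

theorem lemma8:
  fixes M :: "'a measure" and r :: "'a \<Rightarrow> real" and P :: "'w measure"
    and eps :: "'a \<Rightarrow> 'w \<Rightarrow> real" and \<alpha> :: real and p :: "'a \<Rightarrow> real"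
  defines "Q \<equiv> Qfun r eps P"
  defines "Qs \<equiv> esssup M Q"
  assumes "sigma_finite_measure M"
    and "r \<in> borel_measurable M"
    and "prob_space P"
    and "\<And>x. x \<in> space M \<Longrightarrow> eps x \<in> borel_measurable P"
    and "Q \<in> borel_measurable M"
    and "0 < \<alpha>" and "\<alpha> < 1"
    and "p \<in> prob_densities M"
    and "0 < Qs" and "Qs < \<infinity>"
    and "\<And>x. x \<in> space M \<Longrightarrow> Q x \<le> Qs"
    and "ennreal \<alpha> > inverse (\<integral>\<^sup>+ x. (if Q x = Qs then \<infinity> else Qs / (Qs - Q x)) * ennreal (p x) \<partial>M)"
  shows "\<exists>w. w \<in> prob_densities (Pref M p) \<and> w \<in> pos_cone M p
           \<and> (AE x in Pref M p. LNop M p \<alpha> (\<lambda>x. enn2real (Q x)) w x = w x)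
           \<and> (\<forall>w'. w' \<in> prob_densities (Pref M p) \<and> w' \<in> pos_cone M p
                  \<and> (AE x in Pref M p. LNop M p \<alpha> (\<lambda>x. enn2real (Q x)) w' x = w' x)
                  \<longrightarrow> (AE x in Pref M p. w' x = w x))
           \<and> (1 - \<alpha>) * enn2real Qs < inner_ref M p w (\<lambda>x. enn2real (Q x))
           \<and> inner_ref M p w (\<lambda>x. enn2real (Q x)) \<le> enn2real Qs"
proof -
  have p_meas: "p \<in> borel_measurable M" using assms(10) by (simp add: prob_densities_def)
  interpret profile_space "Pref M p" "\<lambda>x. enn2real (Q x)" "enn2real Qs" \<alpha>
    using profile_space_Pref assms(7-13) by blast
  obtain c where c: "(1 - \<alpha>) * enn2real Qs < c" "(\<integral>x. profile c x \<partial>Pref M p) = 1"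
    using exists_normalizing_constant assms(14) nn_integral_ratio_Pref[OF assms(7) p_meas assms(12,13)]
    by auto
  show ?thesis
  proof (intro exI[of _ "profile c"] conjI allI impI)
    show "w' \<in> prob_densities (Pref M p) \<and> w' \<in> pos_cone M p
        \<and> (AE x in Pref M p. LNop M p \<alpha> (\<lambda>x. enn2real (Q x)) w' x = w' x)
        \<Longrightarrow> AE x in Pref M p. w' x = profile c x" for w'
      using fixed_point_eq_profile[OF refl _ _ _ c] by blast
    show "profile c \<in> prob_densities (Pref M p)" using profile_in_prob_densities[OF c] .
    show "profile c \<in> pos_cone M p"
      and "AE x in Pref M p. LNop M p \<alpha> (\<lambda>x. enn2real (Q x)) (profile c) x = profile c x"
      using profile_fixed_point[OF refl c] by blast+
    show "(1 - \<alpha>) * enn2real Qs < inner_ref M p (profile c) (\<lambda>x. enn2real (Q x))"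
      and "inner_ref M p (profile c) (\<lambda>x. enn2real (Q x)) \<le> enn2real Qs"
      using c profile_fixed_point(2)[OF refl c] normalizing_constant_le[OF c] by simp_all
  qed
qed

end
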